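(* Let $n\ge1$, $k\ge2$ and $B,B'\in\mathrm{GL}_n(\mathbb{R})$. The actions $\rho_B$ and $\rho_{B'}$ are smoothly conjugate if and only if there exist $T\in O(n)$ and $c>0$ such that $B'=(cT)B$.
   Context: $\Gamma_{n,k} = \langle a, b_1,\dots,b_n \mid a b_i a^{-1} = b_i^k,\ b_i b_j = b_j b_i\rangle$. Elements of $\mathrm{GL}_n(\mathbb{R})$ are identified with bases $B=(v_1,\dots,v_n)$ of $\mathbb{R}^n$ (columns). Identify $S^n=\mathbb{R}^n\cup\{\infty\}$ by stereographic projection; $\rho_B$ is the smooth $\Gamma_{n,k}$-action on $S^n$ with $\rho_B^a(x)=kx$, $\rho_B^{b_i}(x)=x+v_i$ for $x\in\mathbb{R}^n$ and $\rho_B^a(\infty)=\rho_B^{b_i}(\infty)=\infty$. $O(n)$ is the orthogonal group. Smoothly conjugate means there is a diffeomorphism $h$ of $S^n$ with $\rho_{B'}^\gamma\circ h=h\circ\rho_B^\gamma$ for all $\gamma\in\Gamma_{n,k}$. *)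

theory Defs
  imports "HOL-Analysis.Analysis"
begin

fun iter_dd :: "'a::real_normed_vector list \<Rightarrow> ('a \<Rightarrow> 'b::real_normed_vector) \<Rightarrow> 'a \<Rightarrow> 'b" where
  "iter_dd [] f = f"
| "iter_dd (v # vs) f = (\<lambda>x. frechet_derivative (iter_dd vs f) (at x) v)"

definition smooth_on :: "'a::euclidean_space set \<Rightarrow> ('a \<Rightarrow> 'b::real_normed_vector) \<Rightarrow> bool" where
  "smooth_on S f \<longleftrightarrow> open S \<and> (\<forall>vs. set vs \<subseteq> Basis \<longrightarrow> iter_dd vs f differentiable_on S)"

text \<open>Points of S^n: Some x for x in R^n, None for the point at infinity.
  Two charts (stereographic projections from the two poles):
  chart 0 = the identity on R^n, chart 1 sends Some x (x \<noteq> 0) to x/|x|^2 and infinity to 0.\<close>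
type_synonym 'n sphere_pt = "(real^'n) option"

definition chart_dom :: "bool \<Rightarrow> 'n::finite sphere_pt set" where
  "chart_dom i = (if i then {p. p \<noteq> Some 0} else {p. p \<noteq> None})"

definition chart :: "bool \<Rightarrow> 'n::finite sphere_pt \<Rightarrow> real^'n" where
  "chart i p = (if i then (case p of None \<Rightarrow> 0 | Some x \<Rightarrow> inverse ((norm x)\<^sup>2) *\<^sub>R x)
                else (case p of None \<Rightarrow> 0 | Some x \<Rightarrow> x))"

definition chart_inv :: "bool \<Rightarrow> real^'n::finite \<Rightarrow> 'n sphere_pt" where
  "chart_inv i y = (if i then (if y = 0 then None else Some (inverse ((norm y)\<^sup>2) *\<^sub>R y))
                    else Some y)"

definition smooth_sphere_map :: "('n::finite sphere_pt \<Rightarrow> 'n sphere_pt) \<Rightarrow> bool" where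
  "smooth_sphere_map h \<longleftrightarrow>
     (\<forall>i j. smooth_on (chart i ` (chart_dom i \<inter> h -` chart_dom j))
                      (chart j \<circ> h \<circ> chart_inv i))"

definition sphere_diffeo :: "('n::finite sphere_pt \<Rightarrow> 'n sphere_pt) \<Rightarrow> bool" where
  "sphere_diffeo h \<longleftrightarrow> bij h \<and> smooth_sphere_map h \<and> smooth_sphere_map (inv h)"

text \<open>B is an n x n matrix whose columns v_i = column i B form the basis.\<close>
definition rho_a :: "int \<Rightarrow> 'n::finite sphere_pt \<Rightarrow> 'n sphere_pt" where
  "rho_a k p = map_option (\<lambda>x. of_int k *\<^sub>R x) p"

definition rho_b :: "real^'n^'n \<Rightarrow> 'n::finite \<Rightarrow> 'n sphere_pt \<Rightarrow> 'n sphere_pt" where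
  "rho_b B i p = map_option (\<lambda>x. x + column i B) p"

text \<open>Smooth conjugacy: h conjugates every generator, hence every element of Gamma_{n,k}.\<close>
definition smoothly_conjugate :: "int \<Rightarrow> real^'n^'n \<Rightarrow> real^'n^'n \<Rightarrow> bool" where
  "smoothly_conjugate k B B' \<longleftrightarrow>
     (\<exists>h::'n::finite sphere_pt \<Rightarrow> 'n sphere_pt. sphere_diffeo h \<and>
        rho_a k \<circ> h = h \<circ> rho_a k \<and>
        (\<forall>i. rho_b B' i \<circ> h = h \<circ> rho_b B i))"

end

theory Submission
  imports Defs
begin

text \<open>A smooth conjugacy h must fix \<infinity>, the only common fixed point of the translations, so on
  \<open>\<real>\<^sup>n\<close> it is a homeomorphism \<phi> with \<open>\<phi>(k x) = k \<phi>(x)\<close> and \<open>\<phi>(x + v\<^sub>i) = \<phi>(x) + v'\<^sub>i\<close>.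
  Conjugating by powers of the dilation, \<phi> is also equivariant for the translations by
  \<open>k\<^sup>-\<^sup>m v\<^sub>i\<close>, hence by continuity for all real multiples of \<open>v\<^sub>i\<close>: \<phi> is a linear map A with
  \<open>B' = A B\<close>. In the chart at \<infinity>, A reads \<open>y \<mapsto> |y|\<^sup>2/|Ay|\<^sup>2 \<cdot> Ay\<close>. This map is homogeneous of
  degree one, so its differentiability at 0 makes it linear, which forces \<open>|Ay|/|y|\<close> to be
  constant: A = c T with T orthogonal. Conversely, in every pair of charts such a conformal
  linear map is a rational function regular on the chart domain, hence smooth.\<close>

text \<open>The algebra generated by constants, coordinates and, away from 0, \<open>1/|x|\<^sup>2\<close>: it is closed
  under directional derivatives, so its members are smooth.\<close>

inductive inv_poly_on :: "(real^'n::finite) set \<Rightarrow> (real^'n \<Rightarrow> real) \<Rightarrow> bool" for U where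
  inv_poly_const: "inv_poly_on U (\<lambda>x. c)"
| inv_poly_coord: "inv_poly_on U (\<lambda>x. x $ j)"
| inv_poly_inverse_inner: "0 \<notin> U \<Longrightarrow> inv_poly_on U (\<lambda>x. inverse (x \<bullet> x))"
| inv_poly_add: "inv_poly_on U f \<Longrightarrow> inv_poly_on U g \<Longrightarrow> inv_poly_on U (\<lambda>x. f x + g x)"
| inv_poly_mult: "inv_poly_on U f \<Longrightarrow> inv_poly_on U g \<Longrightarrow> inv_poly_on U (\<lambda>x. f x * g x)"
| inv_poly_cong: "inv_poly_on U f \<Longrightarrow> (\<And>x. x \<in> U \<Longrightarrow> f x = g x) \<Longrightarrow> inv_poly_on U g"

lemma inv_poly_sum:
  "finite S \<Longrightarrow> (\<And>i. i \<in> S \<Longrightarrow> inv_poly_on U (f i)) \<Longrightarrow> inv_poly_on U (\<lambda>x. \<Sum>i\<in>S. f i x)"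
  by (induction S rule: finite_induct) (auto intro: inv_poly_add inv_poly_const)

lemma inv_poly_inner: "inv_poly_on U (\<lambda>x. x \<bullet> v)"
proof -
  have "inv_poly_on U (\<lambda>x. \<Sum>i\<in>UNIV. x $ i * v $ i)"
    by (intro inv_poly_sum inv_poly_mult inv_poly_coord inv_poly_const) auto
  then show ?thesis by (simp add: inner_vec_def)
qed

lemma inv_poly_has_derivative:
  assumes "open U" and "inv_poly_on U f"
  shows "\<exists>D. (\<forall>x\<in>U. (f has_derivative D x) (at x)) \<and> (\<forall>v. inv_poly_on U (\<lambda>x. D x v))"
  using assms(2)
proof induction
  case (inv_poly_const c)
  show ?case by (rule exI[of _ "\<lambda>x h. 0"]) (auto intro: inv_poly_on.inv_poly_const)
next
  case (inv_poly_coord j)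
  show ?case
    by (rule exI[of _ "\<lambda>x h. h $ j"])
      (auto intro: inv_poly_on.inv_poly_const bounded_linear.has_derivative[OF bounded_linear_vec_nth])
next
  case inv_poly_inverse_inner
  let ?D = "\<lambda>x h. - (inverse (x \<bullet> x) * (x \<bullet> h + h \<bullet> x) * inverse (x \<bullet> x))"
  have "((\<lambda>x. inverse (x \<bullet> x)) has_derivative ?D x) (at x)" if "x \<in> U" for x
    using that inv_poly_inverse_inner
    by (intro Deriv.has_derivative_inverse has_derivative_inner has_derivative_ident) auto
  moreover have "inv_poly_on U (\<lambda>x. ?D x v)" for v
  proof -
    have "inv_poly_on U (\<lambda>x. (-1) * (inverse (x \<bullet> x) * (x \<bullet> v + x \<bullet> v) * inverse (x \<bullet> x)))"
      using inv_poly_inverse_inner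
      by (intro inv_poly_on.inv_poly_mult inv_poly_on.inv_poly_add inv_poly_on.inv_poly_const
          inv_poly_on.inv_poly_inverse_inner inv_poly_inner)
    then show ?thesis by (simp add: inner_commute)
  qed
  ultimately show ?case by (intro exI[of _ ?D]) blast
next
  case (inv_poly_add f g)
  then obtain Df Dg where
    "\<forall>x\<in>U. (f has_derivative Df x) (at x)" "\<forall>v. inv_poly_on U (\<lambda>x. Df x v)"
    "\<forall>x\<in>U. (g has_derivative Dg x) (at x)" "\<forall>v. inv_poly_on U (\<lambda>x. Dg x v)" by blast
  then show ?case
    by (intro exI[of _ "\<lambda>x h. Df x h + Dg x h"])
      (auto intro: inv_poly_on.inv_poly_add has_derivative_add)
next
  case (inv_poly_mult f g)
  then obtain Df Dg where
    "\<forall>x\<in>U. (f has_derivative Df x) (at x)" "\<forall>v. inv_poly_on U (\<lambda>x. Df x v)"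
    "\<forall>x\<in>U. (g has_derivative Dg x) (at x)" "\<forall>v. inv_poly_on U (\<lambda>x. Dg x v)" by blast
  with inv_poly_mult.hyps show ?case
    by (intro exI[of _ "\<lambda>x h. f x * Dg x h + Df x h * g x"])
      (simp add: has_derivative_mult inv_poly_on.inv_poly_add inv_poly_on.inv_poly_mult)
next
  case (inv_poly_cong f g)
  then obtain D where "\<forall>x\<in>U. (f has_derivative D x) (at x)" "\<forall>v. inv_poly_on U (\<lambda>x. D x v)"
    by blast
  with inv_poly_cong.hyps(2) \<open>open U\<close> show ?case
    by (metis has_derivative_transform_within_open)
qed

definition vec_inv_poly_on :: "(real^'n::finite) set \<Rightarrow> (real^'n \<Rightarrow> real^'m::finite) \<Rightarrow> bool" where
  "vec_inv_poly_on U f \<longleftrightarrow> (\<forall>j. inv_poly_on U (\<lambda>x. f x $ j))"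

lemma vec_inv_poly_matrix: "vec_inv_poly_on U (\<lambda>x. M *v x)"
  unfolding vec_inv_poly_on_def
proof
  fix j
  have "inv_poly_on U (\<lambda>x. \<Sum>i\<in>UNIV. M $ j $ i * x $ i)"
    by (intro inv_poly_sum inv_poly_mult inv_poly_const inv_poly_coord) auto
  then show "inv_poly_on U (\<lambda>x. (M *v x) $ j)"
    by (simp add: matrix_vector_mult_def)
qed

lemma vec_inv_poly_scaleR:
  "inv_poly_on U s \<Longrightarrow> vec_inv_poly_on U f \<Longrightarrow> vec_inv_poly_on U (\<lambda>x. s x *\<^sub>R f x)"
  unfolding vec_inv_poly_on_def by (auto intro: inv_poly_mult)

lemma vec_inv_poly_cong:
  "vec_inv_poly_on U f \<Longrightarrow> (\<And>x. x \<in> U \<Longrightarrow> f x = g x) \<Longrightarrow> vec_inv_poly_on U g"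
  unfolding vec_inv_poly_on_def by (auto intro: inv_poly_cong)

lemma has_derivative_vec_lambda:
  fixes f :: "'a::real_normed_vector \<Rightarrow> real^'m::finite"
  assumes "\<And>j. ((\<lambda>x. f x $ j) has_derivative D j) (at x)"
  shows "(f has_derivative (\<lambda>h. \<chi> j. D j h)) (at x)"
proof (rule has_derivative_componentwise_within[THEN iffD2], intro ballI)
  fix i :: "real^'m" assume "i \<in> Basis"
  then obtain j where "i = axis j 1" by (auto simp: Basis_vec_def)
  with assms[of j] show "((\<lambda>x. f x \<bullet> i) has_derivative (\<lambda>h. (\<chi> j. D j h) \<bullet> i)) (at x)"
    by (simp add: inner_axis)
qed

lemma vec_inv_poly_has_derivative:
  fixes f :: "real^'n::finite \<Rightarrow> real^'m::finite"
  assumes "open U" and "vec_inv_poly_on U f"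
  shows "\<exists>D. (\<forall>x\<in>U. (f has_derivative D x) (at x)) \<and> (\<forall>v. vec_inv_poly_on U (\<lambda>x. D x v))"
proof -
  have "\<forall>j. \<exists>D. (\<forall>x\<in>U. ((\<lambda>x. f x $ j) has_derivative D x) (at x)) \<and> (\<forall>v. inv_poly_on U (\<lambda>x. D x v))"
    using assms inv_poly_has_derivative unfolding vec_inv_poly_on_def by blast
  then obtain D where D:
    "\<And>j x. x \<in> U \<Longrightarrow> ((\<lambda>x. f x $ j) has_derivative D j x) (at x)"
    "\<And>j v. inv_poly_on U (\<lambda>x. D j x v)"
    by (metis choice)
  have "(f has_derivative (\<lambda>h. \<chi> j. D j x h)) (at x)" if "x \<in> U" for x
    using D(1)[OF that] by (rule has_derivative_vec_lambda)
  moreover have "vec_inv_poly_on U (\<lambda>x. \<chi> j. D j x v)" for v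
    using D(2) by (simp add: vec_inv_poly_on_def)
  ultimately show ?thesis by (intro exI[of _ "\<lambda>x h. \<chi> j. D j x h"]) blast
qed

lemma smooth_on_vec_inv_poly:
  fixes f :: "real^'n::finite \<Rightarrow> real^'m::finite"
  assumes "open U" and "vec_inv_poly_on U f"
  shows "smooth_on U f"
proof -
  have "vec_inv_poly_on U (iter_dd vs f)" for vs
  proof (induction vs)
    case (Cons v vs)
    then obtain D where D: "\<forall>x\<in>U. (iter_dd vs f has_derivative D x) (at x)"
      "vec_inv_poly_on U (\<lambda>x. D x v)"
      using vec_inv_poly_has_derivative[OF \<open>open U\<close>] by blast
    have "D x v = iter_dd (v # vs) f x" if "x \<in> U" for x
      using D(1) that frechet_derivative_at by fastforce
    with D(2) show ?case by (rule vec_inv_poly_cong)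
  qed (use assms in simp)
  then have "iter_dd vs f differentiable_on U" for vs
    using vec_inv_poly_has_derivative[OF \<open>open U\<close>]
    unfolding differentiable_on_def differentiable_def
    by (meson has_derivative_at_withinI)
  with \<open>open U\<close> show ?thesis
    unfolding smooth_on_def by blast
qed

section \<open>Charts of the sphere and conformal linear maps\<close>

lemma chart_chart_inv [simp]: "chart i (chart_inv i y) = y"
  by (cases "y = 0") (simp_all add: chart_def chart_inv_def power2_eq_square field_simps)

lemma chart_inv_chart: "p \<in> chart_dom i \<Longrightarrow> chart_inv i (chart i p) = p"
  by (cases i; cases p) (auto simp: chart_def chart_inv_def chart_dom_def power2_eq_square field_simps)

lemma chart_inv_in_chart_dom: "chart_inv i y \<in> chart_dom i"
  by (simp add: chart_inv_def chart_dom_def)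

lemma chart_image_chart_dom_Int: "chart i ` (chart_dom i \<inter> S) = chart_inv i -` S"
proof
  show "chart i ` (chart_dom i \<inter> S) \<subseteq> chart_inv i -` S"
    by (auto simp: chart_inv_chart)
  show "chart_inv i -` S \<subseteq> chart i ` (chart_dom i \<inter> S)"
  proof
    fix y assume "y \<in> chart_inv i -` S"
    then show "y \<in> chart i ` (chart_dom i \<inter> S)"
      by (intro image_eqI[of _ _ "chart_inv i y"]) (simp_all add: chart_inv_in_chart_dom)
  qed
qed

lemma chart_inv_vimage_chart_dom: "chart_inv i -` chart_dom j = (if i = j then UNIV else - {0})"
  by (cases i; cases j) (auto simp: chart_inv_def chart_dom_def)

lemma map_option_vimage_chart_dom:
  assumes "\<And>x. A *v x = 0 \<longleftrightarrow> x = 0"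
  shows "map_option (\<lambda>x. A *v x) -` chart_dom j = chart_dom j"
  using assms by (auto simp: chart_dom_def)

lemma chart_at_infinity_matrix:
  "chart True (map_option (\<lambda>x. A *v x) (chart_inv True y))
     = (norm y ^ 2 / norm (A *v y) ^ 2) *\<^sub>R (A *v y)"
proof (cases "y = 0 \<or> A *v y = 0")
  case False
  then show ?thesis
    by (simp add: chart_def chart_inv_def matrix_vector_mult_scaleR power_mult_distrib field_simps)
qed (auto simp: chart_def chart_inv_def matrix_vector_mult_scaleR)

lemma smooth_sphere_map_scaled_orthogonal:
  fixes T :: "real^'n::finite^'n"
  assumes "orthogonal_matrix T" and "c > 0"
  shows "smooth_sphere_map (map_option (\<lambda>x. (c *\<^sub>R T) *v x))"
proof -
  define A where "A = c *\<^sub>R T"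
  define h where "h = map_option (\<lambda>x. A *v x)"
  have norm_A: "norm (A *v x) = c * norm x" for x
    using orthogonal_transformation_norm[of "\<lambda>x. T *v x"] assms
    by (simp add: A_def orthogonal_transformation_matrix flip: scaleR_matrix_vector_assoc)
  then have A_eq_0: "A *v x = 0 \<longleftrightarrow> x = 0" for x
    using \<open>c > 0\<close> by (metis mult_eq_0_iff norm_eq_zero less_irrefl)
  have "smooth_on (chart i ` (chart_dom i \<inter> h -` chart_dom j)) (chart j \<circ> h \<circ> chart_inv i)"
    for i j
  proof -
    define U :: "(real^'n) set" where "U = (if i = j then UNIV else - {0})"
    \<comment> \<open>each chart at \<infinity> contributes the inversion \<open>x \<mapsto> x/|x|\<^sup>2\<close>, and \<open>|Ax| = c|x|\<close>\<close>
    have rep: "(chart j \<circ> h \<circ> chart_inv i) x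
        = ((if j then inverse (c ^ 2) else 1) * (if i = j then 1 else inverse (x \<bullet> x))) *\<^sub>R (A *v x)"
      if "x \<in> U" for x
    proof (cases i; cases j)
      assume "i" "j"
      then show ?thesis
        using chart_at_infinity_matrix[of A x] \<open>c > 0\<close>
        by (cases "x = 0") (simp_all add: h_def norm_A power_mult_distrib inverse_eq_divide)
    qed (use that in \<open>auto simp: U_def h_def chart_def chart_inv_def norm_A power_mult_distrib
           power2_norm_eq_inner matrix_vector_mult_scaleR\<close>)
    have "vec_inv_poly_on U (\<lambda>x.
        ((if j then inverse (c ^ 2) else 1) * (if i = j then 1 else inverse (x \<bullet> x))) *\<^sub>R (A *v x))"
      by (auto simp: U_def intro!: vec_inv_poly_scaleR vec_inv_poly_matrix inv_poly_mult inv_poly_const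
          inv_poly_inverse_inner)
    then have "vec_inv_poly_on U (chart j \<circ> h \<circ> chart_inv i)"
      by (rule vec_inv_poly_cong) (rule rep[symmetric])
    with open_Compl[of "{0}"] have "smooth_on U (chart j \<circ> h \<circ> chart_inv i)"
      by (intro smooth_on_vec_inv_poly) (auto simp: U_def)
    moreover have "chart i ` (chart_dom i \<inter> h -` chart_dom j) = U"
      by (simp add: h_def U_def A_eq_0 chart_image_chart_dom_Int map_option_vimage_chart_dom
          chart_inv_vimage_chart_dom)
    ultimately show ?thesis by simp
  qed
  then show ?thesis
    unfolding smooth_sphere_map_def h_def A_def by blast
qed

section \<open>Rigidity of continuous equivariant maps\<close>

lemma scale_equivariant_power:
  fixes \<phi> :: "'a::real_vector \<Rightarrow> 'b::real_vector"
  assumes "\<And>x. \<phi> (K *\<^sub>R x) = K *\<^sub>R \<phi> x"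
  shows "\<phi> ((K ^ m) *\<^sub>R x) = (K ^ m) *\<^sub>R \<phi> x"
proof (induction m)
  case (Suc m)
  have "\<phi> ((K ^ Suc m) *\<^sub>R x) = K *\<^sub>R \<phi> ((K ^ m) *\<^sub>R x)"
    using assms[of "(K ^ m) *\<^sub>R x"] by simp
  with Suc show ?case
    by simp
qed simp

lemma translation_equivariant_int:
  fixes \<phi> :: "'a::real_vector \<Rightarrow> 'b::real_vector"
  assumes "\<And>x. \<phi> (x + u) = \<phi> x + u'"
  shows "\<phi> (x + of_int z *\<^sub>R u) = \<phi> x + of_int z *\<^sub>R u'"
proof (induction z rule: int_induct[of _ 0])
  case (step1 z)
  have "\<phi> (x + of_int (z + 1) *\<^sub>R u) = \<phi> ((x + of_int z *\<^sub>R u) + u)"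
    by (simp add: algebra_simps)
  also have "\<dots> = \<phi> x + of_int z *\<^sub>R u' + u'"
    by (simp only: assms step1.IH)
  finally show ?case
    by (simp add: algebra_simps)
next
  case (step2 z)
  have "\<phi> (x + of_int z *\<^sub>R u) = \<phi> ((x + of_int (z - 1) *\<^sub>R u) + u)"
    by (simp add: algebra_simps)
  also have "\<dots> = \<phi> (x + of_int (z - 1) *\<^sub>R u) + u'"
    by (rule assms)
  finally show ?case
    using step2.IH by (simp add: algebra_simps)
qed simp

lemma translation_equivariant_inverse_power:
  fixes \<phi> :: "'a::real_vector \<Rightarrow> 'b::real_vector"
  assumes "K \<noteq> 0"
    and scale: "\<And>x. \<phi> (K *\<^sub>R x) = K *\<^sub>R \<phi> x"
    and translate: "\<And>x. \<phi> (x + u) = \<phi> x + u'"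
  shows "\<phi> (x + inverse (K ^ m) *\<^sub>R u) = \<phi> x + inverse (K ^ m) *\<^sub>R u'"
proof -
  have "(K ^ m) *\<^sub>R \<phi> (x + inverse (K ^ m) *\<^sub>R u) = \<phi> ((K ^ m) *\<^sub>R x + u)"
    using \<open>K \<noteq> 0\<close>
    by (simp add: scaleR_add_right flip: scale_equivariant_power[where \<phi>=\<phi>, OF scale])
  also have "\<dots> = (K ^ m) *\<^sub>R (\<phi> x + inverse (K ^ m) *\<^sub>R u')"
    using \<open>K \<noteq> 0\<close>
    by (simp add: translate scaleR_add_right scale_equivariant_power[where \<phi>=\<phi>, OF scale])
  finally show ?thesis
    using \<open>K \<noteq> 0\<close> by simp
qed

lemma adic_floor_approximation_LIMSEQ:
  fixes K t :: real
  assumes "K > 1"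
  shows "(\<lambda>m. of_int \<lfloor>K ^ m * t\<rfloor> / K ^ m) \<longlonglongrightarrow> t"
proof (rule real_tendsto_sandwich)
  have "t - inverse (K ^ m) \<le> of_int \<lfloor>K ^ m * t\<rfloor> / K ^ m \<and> of_int \<lfloor>K ^ m * t\<rfloor> / K ^ m \<le> t"
    for m :: nat
  proof -
    have "K ^ m > 0"
      using assms by simp
    have "t - inverse (K ^ m) = (K ^ m * t - 1) / K ^ m"
      using assms by (simp add: diff_divide_distrib inverse_eq_divide)
    also have "\<dots> \<le> of_int \<lfloor>K ^ m * t\<rfloor> / K ^ m"
      using \<open>K ^ m > 0\<close> by (intro divide_right_mono) linarith+
    moreover have "of_int \<lfloor>K ^ m * t\<rfloor> / K ^ m \<le> (K ^ m * t) / K ^ m"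
      using \<open>K ^ m > 0\<close> by (intro divide_right_mono) linarith+
    ultimately show ?thesis
      using assms by simp
  qed
  then show "\<forall>\<^sub>F m in sequentially. t - inverse (K ^ m) \<le> of_int \<lfloor>K ^ m * t\<rfloor> / K ^ m"
    and "\<forall>\<^sub>F m in sequentially. of_int \<lfloor>K ^ m * t\<rfloor> / K ^ m \<le> t"
    by (simp_all add: always_eventually)
  have "(\<lambda>m. t - inverse (K ^ m)) \<longlonglongrightarrow> t - 0"
    by (intro tendsto_diff tendsto_const LIMSEQ_inverse_realpow_zero assms)
  then show "(\<lambda>m. t - inverse (K ^ m)) \<longlonglongrightarrow> t"
    by simp
qed simp

lemma translation_equivariant_real:
  fixes \<phi> :: "'a::real_normed_vector \<Rightarrow> 'b::real_normed_vector"
  assumes "K > 1"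
    and scale: "\<And>x. \<phi> (K *\<^sub>R x) = K *\<^sub>R \<phi> x"
    and translate: "\<And>x. \<phi> (x + u) = \<phi> x + u'"
    and "continuous_on UNIV \<phi>"
  shows "\<phi> (x + t *\<^sub>R u) = \<phi> x + t *\<^sub>R u'"
proof -
  define t_approx where "t_approx m = of_int \<lfloor>K ^ m * t\<rfloor> / K ^ m" for m :: nat
  have t_approx: "t_approx \<longlonglongrightarrow> t"
    unfolding t_approx_def using \<open>K > 1\<close> by (rule adic_floor_approximation_LIMSEQ)
  have "\<phi> (x + t_approx m *\<^sub>R u) = \<phi> x + t_approx m *\<^sub>R u'" for m
  proof -
    have "\<phi> (y + inverse (K ^ m) *\<^sub>R u) = \<phi> y + inverse (K ^ m) *\<^sub>R u'" for y
      using \<open>K > 1\<close> by (intro translation_equivariant_inverse_power[where \<phi>=\<phi>, OF _ scale translate]) simp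
    from translation_equivariant_int[where \<phi>=\<phi>, OF this, of x "\<lfloor>K ^ m * t\<rfloor>"] show ?thesis
      by (simp add: t_approx_def divide_inverse)
  qed
  then have "(\<lambda>m. \<phi> (x + t_approx m *\<^sub>R u)) \<longlonglongrightarrow> \<phi> x + t *\<^sub>R u'"
    by (simp add: t_approx tendsto_add tendsto_scaleR)
  moreover have "(\<lambda>m. \<phi> (x + t_approx m *\<^sub>R u)) \<longlonglongrightarrow> \<phi> (x + t *\<^sub>R u)"
    using \<open>continuous_on UNIV \<phi>\<close>
    by (intro isCont_tendsto_compose[of _ \<phi>] tendsto_add tendsto_scaleR tendsto_const t_approx)
      (simp add: continuous_on_eq_continuous_at)
  ultimately show ?thesis
    by (rule LIMSEQ_unique[rotated])
qed

lemma translation_equivariant_sum: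
  fixes \<phi> :: "'a::real_vector \<Rightarrow> 'b::real_vector"
  assumes "\<And>x t i. \<phi> (x + t *\<^sub>R v i) = \<phi> x + t *\<^sub>R v' i" and "finite S"
  shows "\<phi> (x + (\<Sum>i\<in>S. q i *\<^sub>R v i)) = \<phi> x + (\<Sum>i\<in>S. q i *\<^sub>R v' i)"
  using \<open>finite S\<close>
proof (induction S arbitrary: x)
  case (insert a S)
  have "\<phi> (x + (\<Sum>i\<in>insert a S. q i *\<^sub>R v i)) = \<phi> ((x + q a *\<^sub>R v a) + (\<Sum>i\<in>S. q i *\<^sub>R v i))"
    using insert.hyps by (simp add: algebra_simps)
  also have "\<dots> = \<phi> x + q a *\<^sub>R v' a + (\<Sum>i\<in>S. q i *\<^sub>R v' i)"
    by (simp only: insert.IH assms(1))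
  finally show ?case
    using insert.hyps by (simp add: algebra_simps)
qed simp

lemma equivariant_continuous_imp_matrix:
  fixes \<phi> :: "real^'n::finite \<Rightarrow> real^'m::finite" and B :: "real^'n^'n" and B' :: "real^'n^'m"
  assumes "K > 1"
    and scale: "\<And>x. \<phi> (K *\<^sub>R x) = K *\<^sub>R \<phi> x"
    and translate: "\<And>x i. \<phi> (x + column i B) = \<phi> x + column i B'"
    and "continuous_on UNIV \<phi>"
  shows "\<phi> (B *v q) = B' *v q"
proof -
  have "(K - 1) *\<^sub>R \<phi> 0 = 0"
    using scale[of 0] by (simp add: algebra_simps)
  with \<open>K > 1\<close> have "\<phi> 0 = 0"
    by simp
  moreover have "\<phi> (0 + (\<Sum>i\<in>UNIV. q $ i *\<^sub>R column i B)) = \<phi> 0 + (\<Sum>i\<in>UNIV. q $ i *\<^sub>R column i B')"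
    using translation_equivariant_real[OF \<open>K > 1\<close> scale translate \<open>continuous_on UNIV \<phi>\<close>]
    by (intro translation_equivariant_sum) auto
  ultimately show ?thesis
    by (simp add: matrix_mult_sum scalar_mult_eq_scaleR)
qed

section \<open>Smoothness at infinity forces conformality\<close>

lemma homogeneous_differentiable_at_0_imp_linear:
  fixes F :: "'a::real_normed_vector \<Rightarrow> 'b::real_normed_vector"
  assumes homogeneous: "\<And>t y. F (t *\<^sub>R y) = t *\<^sub>R F y" and "F differentiable (at 0)"
  shows "linear F"
proof -
  obtain L where L: "(F has_derivative L) (at 0)"
    using \<open>F differentiable (at 0)\<close> unfolding differentiable_def by blast
  have "F y = L y" for y
  proof -
    have line: "((\<lambda>t::real. t *\<^sub>R y) has_derivative (\<lambda>s. s *\<^sub>R y)) (at 0)"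
      by (intro derivative_eq_intros) auto
    have "((F \<circ> (\<lambda>t. t *\<^sub>R y)) has_derivative (L \<circ> (\<lambda>s. s *\<^sub>R y))) (at 0)"
      using diff_chain_at[OF line] L by simp
    moreover have "F \<circ> (\<lambda>t. t *\<^sub>R y) = (\<lambda>t. t *\<^sub>R F y)"
      by (simp add: o_def homogeneous)
    ultimately have "((\<lambda>t::real. t *\<^sub>R F y) has_derivative (L \<circ> (\<lambda>s. s *\<^sub>R y))) (at 0)"
      by simp
    moreover have "((\<lambda>t::real. t *\<^sub>R F y) has_derivative (\<lambda>s. s *\<^sub>R F y)) (at 0)"
      by (intro derivative_eq_intros) auto
    ultimately have "L \<circ> (\<lambda>s. s *\<^sub>R y) = (\<lambda>s. s *\<^sub>R F y)"
      by (rule has_derivative_unique)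
    then show ?thesis
      by (metis comp_apply scaleR_one)
  qed
  then show ?thesis
    using has_derivative_linear[OF L] by (metis ext)
qed

lemma linear_scalar_multiple_imp_constant:
  fixes f :: "'a::euclidean_space \<Rightarrow> 'b::real_vector"
  assumes "linear f" and "inj f" and "linear (\<lambda>y. g y *\<^sub>R f y)"
  obtains l where "\<And>y. y \<noteq> 0 \<Longrightarrow> g y = l"
proof -
  define F where "F = (\<lambda>y. g y *\<^sub>R f y)"
  have F_add: "F (x + y) = F x + F y" for x y
    using linear_add[OF assms(3)] by (simp add: F_def)
  have basis_eq: "g b = g b'" if "b \<in> Basis" "b' \<in> Basis" "b \<noteq> b'" for b b'
  proof -
    have "f (g (b + b') *\<^sub>R (b + b')) = f (g b *\<^sub>R b + g b' *\<^sub>R b')"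
      using F_add[of b b'] by (simp add: F_def linear_add linear_scale \<open>linear f\<close>)
    then have sum_eq: "g (b + b') *\<^sub>R (b + b') = g b *\<^sub>R b + g b' *\<^sub>R b'"
      by (rule injD[OF \<open>inj f\<close>])
    have "g (b + b') = g b"
      using arg_cong[OF sum_eq, of "\<lambda>v. v \<bullet> b"] that by (simp add: inner_add_left inner_Basis)
    moreover have "g (b + b') = g b'"
      using arg_cong[OF sum_eq, of "\<lambda>v. v \<bullet> b'"] that by (simp add: inner_add_left inner_Basis)
    ultimately show ?thesis
      by simp
  qed
  define l where "l = g (SOME b. b \<in> Basis)"
  have "g b = l" if "b \<in> Basis" for b
    unfolding l_def using basis_eq that someI_ex[of "\<lambda>b. b \<in> Basis"] nonempty_Basis
    by (metis ex_in_conv)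
  then have F_eq: "F = (\<lambda>y. l *\<^sub>R f y)"
    using assms by (intro linear_eq_stdbasis) (simp_all add: F_def linear_compose_scale_right)
  show ?thesis
  proof (rule that)
    fix y :: 'a assume "y \<noteq> 0"
    then have "f y \<noteq> 0"
      using \<open>inj f\<close> linear_0[OF \<open>linear f\<close>] by (metis injD)
    moreover have "g y *\<^sub>R f y = l *\<^sub>R f y"
      using fun_cong[OF F_eq, of y] by (simp add: F_def)
    ultimately show "g y = l"
      by simp
  qed
qed

lemma orthogonal_matrix_if_norm_scaling:
  fixes A :: "real^'n::finite^'n"
  assumes "c > 0" and "\<And>y. norm (A *v y) = c * norm y"
  shows "orthogonal_matrix (inverse c *\<^sub>R A)"
proof -
  have "norm ((inverse c *\<^sub>R A) *v y) = norm y" for y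
    using assms by (simp flip: scaleR_matrix_vector_assoc)
  then have "orthogonal_transformation (\<lambda>y. (inverse c *\<^sub>R A) *v y)"
    by (simp add: orthogonal_transformation matrix_vector_mul_linear)
  then show ?thesis
    by (simp add: orthogonal_transformation_matrix)
qed

lemma inversion_conjugate_linear_imp_scaled_orthogonal:
  fixes A :: "real^'n::finite^'n"
  assumes "inj (\<lambda>y. A *v y)"
    and "linear (\<lambda>y. (norm y ^ 2 / norm (A *v y) ^ 2) *\<^sub>R (A *v y))"
  shows "\<exists>T c. orthogonal_matrix T \<and> c > 0 \<and> A = c *\<^sub>R T"
proof -
  obtain l where l: "\<And>y. y \<noteq> 0 \<Longrightarrow> norm y ^ 2 / norm (A *v y) ^ 2 = l"
    using linear_scalar_multiple_imp_constant[OF matrix_vector_mul_linear assms] by blast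
  have A_nonzero: "A *v y \<noteq> 0" if "y \<noteq> 0" for y
    using assms(1) that by (metis injD matrix_vector_mult_0_right)
  have "l > 0"
    using l[of "axis undefined 1"] A_nonzero[of "axis undefined 1"] by (auto simp: axis_eq_0_iff)
  define c where "c = inverse (sqrt l)"
  have "c > 0"
    using \<open>l > 0\<close> by (simp add: c_def)
  have "norm (A *v y) = c * norm y" for y
  proof (cases "y = 0")
    case False
    have "norm (A *v y) ^ 2 = (c * norm y) ^ 2"
      using l[OF False] A_nonzero[OF False] \<open>l > 0\<close>
      by (simp add: c_def power_mult_distrib power_inverse field_simps)
    with \<open>c > 0\<close> show ?thesis
      by simp
  qed simp
  with \<open>c > 0\<close> have "orthogonal_matrix (inverse c *\<^sub>R A)"
    by (rule orthogonal_matrix_if_norm_scaling)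
  moreover have "A = c *\<^sub>R (inverse c *\<^sub>R A)"
    using \<open>c > 0\<close> by simp
  ultimately show ?thesis
    using \<open>c > 0\<close> by blast
qed

section \<open>Smooth conjugacy of the actions\<close>

lemma invertible_column_nonzero:
  fixes M :: "real^'n::finite^'n"
  assumes "invertible M"
  shows "column i M \<noteq> 0"
proof
  assume "column i M = 0"
  then have "M *v axis i 1 = 0"
    by (simp add: matrix_vector_mult_basis)
  with assms show False
    by (auto simp: invertible_left_inverse matrix_left_invertible_ker axis_eq_0_iff)
qed

lemma column_matrix_matrix_mult: "column i (M ** N) = M *v column i (N::real^'n::finite^'m)"
  by (simp add: matrix_vector_mul_assoc flip: matrix_vector_mult_basis)

lemma smooth_sphere_map_fixing_infinity:
  assumes "smooth_sphere_map h" and "h None = None" and "\<And>x. h (Some x) = Some (\<phi> x)"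
  shows "continuous_on UNIV \<phi>"
    and "(chart True \<circ> h \<circ> chart_inv True) differentiable (at 0)"
proof -
  have "chart_inv False -` h -` chart_dom False = UNIV"
    by (auto simp: chart_inv_def chart_dom_def assms(3))
  moreover have "chart False \<circ> h \<circ> chart_inv False = \<phi>"
    by (auto simp: chart_def chart_inv_def assms(3))
  ultimately have "smooth_on UNIV \<phi>"
    using assms(1) by (metis smooth_sphere_map_def chart_image_chart_dom_Int)
  then show "continuous_on UNIV \<phi>"
    unfolding smooth_on_def
    by (metis differentiable_imp_continuous_on empty_subsetI iter_dd.simps(1) set_empty)
  define U where "U = chart True ` (chart_dom True \<inter> h -` chart_dom True)"
  have "smooth_on U (chart True \<circ> h \<circ> chart_inv True)"
    using assms(1) by (simp add: U_def smooth_sphere_map_def)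
  moreover have "0 \<in> U"
    unfolding U_def chart_image_chart_dom_Int by (simp add: chart_inv_def chart_dom_def assms(2))
  ultimately show "(chart True \<circ> h \<circ> chart_inv True) differentiable (at 0)"
    unfolding smooth_on_def
    by (metis differentiable_on_eq_differentiable_at empty_subsetI iter_dd.simps(1) set_empty)
qed

lemma conjugacy_of_translation_actions_is_linear:
  fixes h :: "'n::finite sphere_pt \<Rightarrow> 'n sphere_pt" and B B' :: "real^'n^'n"
  assumes "k \<ge> 2" and "invertible B" and "invertible B'" and "sphere_diffeo h"
    and scale: "rho_a k \<circ> h = h \<circ> rho_a k"
    and translate: "\<And>i. rho_b B' i \<circ> h = h \<circ> rho_b B i"
  obtains A where "h = map_option (\<lambda>x. A *v x)" and "B' = A ** B"
proof -
  have "inj h" and "smooth_sphere_map h"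
    using \<open>sphere_diffeo h\<close> by (auto simp: sphere_diffeo_def bij_def)
  have h_None: "h None = None"
  proof (rule ccontr)
    assume "h None \<noteq> None"
    then obtain y where "h None = Some y"
      by blast
    with fun_cong[OF translate[of undefined], of None] have "y + column undefined B' = y"
      by (simp add: rho_b_def)
    with invertible_column_nonzero[OF \<open>invertible B'\<close>] show False
      by simp
  qed
  define \<phi> where "\<phi> x = the (h (Some x))" for x
  have h_Some: "h (Some x) = Some (\<phi> x)" for x
  proof -
    have "h (Some x) \<noteq> None"
      using \<open>inj h\<close> h_None by (metis injD option.distinct(1))
    then show ?thesis
      by (auto simp: \<phi>_def)
  qed
  have "of_int k > (1::real)"
    using \<open>k \<ge> 2\<close> by simp
  moreover have "\<phi> (of_int k *\<^sub>R x) = of_int k *\<^sub>R \<phi> x" for x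
    using fun_cong[OF scale, of "Some x"] by (simp add: rho_a_def h_Some)
  moreover have "\<phi> (x + column i B) = \<phi> x + column i B'" for x i
    using fun_cong[OF translate[of i], of "Some x"] by (simp add: rho_b_def h_Some)
  moreover have "continuous_on UNIV \<phi>"
    using smooth_sphere_map_fixing_infinity[OF \<open>smooth_sphere_map h\<close> h_None h_Some] by blast
  ultimately have \<phi>_B: "\<phi> (B *v q) = B' *v q" for q
    by (rule equivariant_continuous_imp_matrix)
  obtain B_inv where "B ** B_inv = mat 1" and "B_inv ** B = mat 1"
    using \<open>invertible B\<close> unfolding invertible_def by blast
  define A where "A = B' ** B_inv"
  have "\<phi> y = A *v y" for y
    using \<phi>_B[of "B_inv *v y"] \<open>B ** B_inv = mat 1\<close> by (simp add: A_def matrix_vector_mul_assoc)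
  then have "h p = map_option (\<lambda>x. A *v x) p" for p
    by (cases p) (simp_all add: h_None h_Some)
  then have "h = map_option (\<lambda>x. A *v x)"
    by blast
  moreover have "B' = A ** B"
    using \<open>B_inv ** B = mat 1\<close> by (simp add: A_def flip: matrix_mul_assoc)
  ultimately show ?thesis
    by (rule that)
qed

lemma smoothly_conjugate_imp_scaled_orthogonal:
  fixes B B' :: "real^'n::finite^'n"
  assumes "k \<ge> 2" and "invertible B" and "invertible B'" and "smoothly_conjugate k B B'"
  shows "\<exists>T c. orthogonal_matrix T \<and> c > 0 \<and> B' = (c *\<^sub>R T) ** B"
proof -
  obtain h :: "'n sphere_pt \<Rightarrow> 'n sphere_pt" where "sphere_diffeo h"
    and "rho_a k \<circ> h = h \<circ> rho_a k" and "\<And>i. rho_b B' i \<circ> h = h \<circ> rho_b B i"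
    using \<open>smoothly_conjugate k B B'\<close> unfolding smoothly_conjugate_def by blast
  with assms obtain A where h: "h = map_option (\<lambda>x. A *v x)" and "B' = A ** B"
    by (elim conjugacy_of_translation_actions_is_linear)
  have "inj (\<lambda>x. A *v x)"
  proof (rule injI)
    fix x y assume "A *v x = A *v y"
    then have "h (Some x) = h (Some y)"
      by (simp add: h)
    with \<open>sphere_diffeo h\<close> show "x = y"
      by (auto simp: sphere_diffeo_def bij_def dest: injD)
  qed
  define G where "G y = (norm y ^ 2 / norm (A *v y) ^ 2) *\<^sub>R (A *v y)" for y
  have "G (t *\<^sub>R y) = t *\<^sub>R G y" for t y
    by (cases "t = 0") (simp_all add: G_def matrix_vector_mult_scaleR power_mult_distrib)
  moreover have "G differentiable (at 0)"
    using smooth_sphere_map_fixing_infinity(2)[of h "\<lambda>x. A *v x"] \<open>sphere_diffeo h\<close>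
    by (simp add: sphere_diffeo_def h o_def chart_at_infinity_matrix G_def[abs_def])
  ultimately have "linear G"
    by (rule homogeneous_differentiable_at_0_imp_linear)
  with \<open>inj (\<lambda>x. A *v x)\<close> obtain T c where "orthogonal_matrix T" "c > 0" "A = c *\<^sub>R T"
    using inversion_conjugate_linear_imp_scaled_orthogonal unfolding G_def[abs_def] by blast
  with \<open>B' = A ** B\<close> show ?thesis
    by blast
qed

lemma scaled_orthogonal_imp_smoothly_conjugate:
  fixes B B' T :: "real^'n::finite^'n"
  assumes "orthogonal_matrix T" and "c > 0" and "B' = (c *\<^sub>R T) ** B"
  shows "smoothly_conjugate k B B'"
proof -
  define h where "h = map_option (\<lambda>x. (c *\<^sub>R T) *v x)"
  define h' where "h' = map_option (\<lambda>x. (inverse c *\<^sub>R transpose T) *v x)"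
  have "(inverse c *\<^sub>R transpose T) ** (c *\<^sub>R T) = mat 1"
    and "(c *\<^sub>R T) ** (inverse c *\<^sub>R transpose T) = mat 1"
    using assms(1,2)
    by (simp_all add: orthogonal_matrix_def matrix_scalar_ac flip: scalar_matrix_assoc)
  then have "h' \<circ> h = id" and "h \<circ> h' = id"
    by (auto simp: h_def h'_def fun_eq_iff option.map_comp o_def matrix_vector_mul_assoc
        option.map_ident)
  then have "bij h" and "inv h = h'"
    by (auto intro: o_bij inv_unique_comp)
  moreover have "smooth_sphere_map h" and "smooth_sphere_map h'"
    unfolding h_def h'_def using assms(1,2) by (auto intro: smooth_sphere_map_scaled_orthogonal)
  moreover have "rho_a k \<circ> h = h \<circ> rho_a k"
    by (auto simp: fun_eq_iff rho_a_def h_def option.map_comp o_def matrix_vector_mult_scaleR)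
  moreover have "rho_b B' i \<circ> h = h \<circ> rho_b B i" for i
    by (auto simp: fun_eq_iff rho_b_def h_def option.map_comp o_def assms(3) column_matrix_matrix_mult
        matrix_vector_right_distrib)
  ultimately show ?thesis
    unfolding smoothly_conjugate_def sphere_diffeo_def by blast
qed

theorem proposition3p1:
  fixes k :: int and B B' :: "real^'n::finite^'n"
  assumes "k \<ge> 2" and "invertible B" and "invertible B'"
  shows "smoothly_conjugate k B B' \<longleftrightarrow>
    (\<exists>T c. orthogonal_matrix T \<and> c > 0 \<and> B' = (c *\<^sub>R T) ** B)"
  using assms smoothly_conjugate_imp_scaled_orthogonal scaled_orthogonal_imp_smoothly_conjugate
  by blast

end
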